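(* Let $W_{-1}$ be the $2\pi$-periodic function given on $[-\pi,\pi]$ by $W_{-1}(x)=|\sin x|\sin^2(x/2)$ for $|x|\le\frac{2\pi}{3}$ and $W_{-1}(x)=\frac{3\sqrt3}{8}$ for $\frac{2\pi}3\le|x|\le\pi$. For any $\theta\in(0,1)$, if $\delta^*>0$ is small enough, then for any $x^*\in(-\delta^*,\delta^* )$ there exists a positive function $\widetilde W_\theta\in W^{1,\infty}(\mathbb R)$ with $\sin(x)\widetilde W_\theta'(x)\ge0$ on $\mathbb R$ such that for every function $f$ on $[-\pi-x^*,\pi-x^*]$ (with the right-hand side finite), $$\Big\|\frac{\sin(x)\int_0^xf(\bar x)\,d\bar x}{W_{-1}\widetilde W_\theta}\Big\|_{L^\infty([-\pi-x^*,\pi-x^*])}\le\theta\Big\|\frac{f}{W_{-1}\widetilde W_\theta}\Big\|_{L^\infty([-\pi-x^*,\pi-x^*])}.$$ *)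

theory Defs
  imports "HOL-Probability.Probability"
begin

definition Wm1 :: "real \<Rightarrow> real" where
  "Wm1 x = (let y = x - 2 * pi * of_int \<lfloor>(x + pi) / (2 * pi)\<rfloor> in
     if \<bar>y\<bar> \<le> 2 * pi / 3 then \<bar>sin y\<bar> * (sin (y / 2))^2 else 3 * sqrt 3 / 8)"

text \<open>W^{1,infinity}(R): bounded Lipschitz functions (Lipschitz representative).\<close>
definition W1inf :: "(real \<Rightarrow> real) \<Rightarrow> bool" where
  "W1inf g \<longleftrightarrow> bounded (range g) \<and> (\<exists>L. L-lipschitz_on UNIV g)"

definition Linf_norm :: "real \<Rightarrow> real \<Rightarrow> (real \<Rightarrow> real) \<Rightarrow> ereal" where
  "Linf_norm a b g = esssup (restrict_space lebesgue {a..b}) (\<lambda>x. ereal \<bar>g x\<bar>)"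

end

theory Submission
  imports Defs
begin

(* On [-pi - x*, pi - x*] the weight W_{-1} is a nondecreasing function H (Wm1_radial) of |x|. Take
   Wt(x) = exp (K min(|x|, pi)) with K = 3/theta. If |f| <= m W_{-1} Wt a.e., then
   |f t| <= m H(|x|) exp (K |t|) for |t| <= |x|, hence |int_0^x f| <= m H(|x|) exp (K |x|) / K.
   Since |x| exceeds pi by at most |x*| <= 1/K, exp (K |x|) <= e Wt(x) <= 3 Wt(x), and with
   |sin x| <= 1 the quotient is bounded by 3 m / K = theta m. *)

definition Wm1_radial :: "real \<Rightarrow> real" where
  "Wm1_radial s = (if s \<le> 2*pi/3 then sin s * (sin (s/2))^2 else 3 * sqrt 3 / 8)"

lemma has_real_derivative_sin_mult_sin_half_sq:
  "((\<lambda>u. sin u * (sin (u/2))^2) has_real_derivative (sin (s/2) * sin (3 * s / 2))) (at s)"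
proof -
  have "sin (3 * s / 2) = sin s * cos (s/2) + cos s * sin (s/2)"
    using sin_add[of s "s/2"] by (simp add: field_simps)
  then have "cos s * (sin (s/2))^2 + sin s * (2 * sin (s/2) * (cos (s/2) * (1/2)))
      = sin (s/2) * sin (3 * s / 2)"
    by (simp add: power2_eq_square algebra_simps)
  moreover have "((\<lambda>u. sin u * (sin (u/2))^2) has_real_derivative
      cos s * (sin (s/2))^2 + sin s * (2 * sin (s/2) * (cos (s/2) * (1/2)))) (at s)"
    by (auto intro!: derivative_eq_intros)
  ultimately show ?thesis by simp
qed

lemma sin_mult_sin_half_sq_mono:
  assumes "0 \<le> s" "s \<le> t" "t \<le> 2*pi/3"
  shows "sin s * (sin (s/2))^2 \<le> sin t * (sin (t/2))^2"
proof (rule DERIV_nonneg_imp_increasing_open[OF assms(2)])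
  fix x assume x: "s < x" "x < t"
  show "\<exists>y. ((\<lambda>u. sin u * (sin (u/2))^2) has_real_derivative y) (at x) \<and> 0 \<le> y"
    using x assms
    by (intro exI[of _ "sin (x/2) * sin (3 * x / 2)"] conjI has_real_derivative_sin_mult_sin_half_sq
        mult_nonneg_nonneg sin_ge_zero) auto
qed (auto intro!: continuous_intros)

lemma sin_mult_sin_half_sq_2pi_div_3: "sin (2*pi/3) * (sin ((2*pi/3)/2))^2 = 3 * sqrt 3 / 8"
proof -
  have "sin (2*pi/3) = sin (pi/3)"
    using sin_pi_minus[of "pi/3"] by (simp add: field_simps)
  moreover have "sin ((2*pi/3)/2) = sin (pi/3)" by simp
  ultimately show ?thesis by (simp add: sin_60 power2_eq_square field_simps)
qed

lemma Wm1_radial_mono: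
  assumes "0 \<le> s" "s \<le> t"
  shows "Wm1_radial s \<le> Wm1_radial t"
  using sin_mult_sin_half_sq_mono[OF assms] sin_mult_sin_half_sq_mono[OF assms(1) _ order_refl]
    sin_mult_sin_half_sq_2pi_div_3 assms(2)
  by (auto simp: Wm1_radial_def)

lemma Wm1_radial_pos:
  assumes "0 < s"
  shows "0 < Wm1_radial s"
proof (cases "s \<le> 2*pi/3")
  case True
  then have "0 < sin s" "0 < sin (s/2)"
    using assms pi_gt3 by (auto intro!: sin_gt_zero)
  then show ?thesis using True by (simp add: Wm1_radial_def)
qed (simp add: Wm1_radial_def)

lemma Wm1_radial_nonneg: "0 \<le> s \<Longrightarrow> 0 \<le> Wm1_radial s"
  using Wm1_radial_pos[of s] by (cases "s = 0") (auto simp: Wm1_radial_def)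

lemma Wm1_radial_le_1:
  assumes "0 \<le> s"
  shows "Wm1_radial s \<le> 1"
proof -
  have "Wm1_radial s \<le> Wm1_radial (s + pi)"
    using assms by (intro Wm1_radial_mono) auto
  also have "\<dots> = 3 * sqrt 3 / 8"
    using assms pi_gt3 by (simp add: Wm1_radial_def)
  also have "\<dots> \<le> 1"
    using real_less_lsqrt[of 2 3] by simp
  finally show ?thesis .
qed

lemma Wm1_eq_Wm1_radial:
  assumes "\<bar>x\<bar> < 4*pi/3"
  shows "Wm1 x = Wm1_radial \<bar>x\<bar>"
proof -
  consider "\<bar>x\<bar> < pi" | "x = -pi" | "pi \<le> x" | "x < -pi" by linarith
  then show ?thesis
  proof cases
    case 1
    then have "\<lfloor>(x + pi) / (2 * pi)\<rfloor> = 0"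
      by (simp add: floor_eq_iff field_simps abs_less_iff)
    moreover have "\<bar>sin x\<bar> * (sin (x/2))^2 = sin \<bar>x\<bar> * (sin (\<bar>x\<bar>/2))^2"
      using 1 sin_ge_zero[of "\<bar>x\<bar>"] by (cases "x \<ge> 0") auto
    ultimately show ?thesis
      by (simp add: Wm1_def Wm1_radial_def)
  next
    case 2
    then show ?thesis by (simp add: Wm1_def Wm1_radial_def)
  next
    case 3
    then have "\<lfloor>(x + pi) / (2 * pi)\<rfloor> = 1"
      using assms by (simp add: floor_eq_iff field_simps)
    then show ?thesis
      using 3 assms by (auto simp: Wm1_def Wm1_radial_def Let_def)
  next
    case 4
    then have "\<lfloor>(x + pi) / (2 * pi)\<rfloor> = -1"
      using assms by (simp add: floor_eq_iff field_simps)
    then show ?thesis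
      using 4 assms by (auto simp: Wm1_def Wm1_radial_def Let_def)
  qed
qed

lemma borel_measurable_Wm1 [measurable]: "Wm1 \<in> borel_measurable borel"
  unfolding Wm1_def Let_def by measurable

definition exp_weight :: "real \<Rightarrow> real \<Rightarrow> real" where
  "exp_weight K x = exp (K * min \<bar>x\<bar> pi)"

lemma exp_weight_pos: "0 < exp_weight K x"
  by (simp add: exp_weight_def)

lemma exp_weight_le: "0 \<le> K \<Longrightarrow> exp_weight K x \<le> exp (K * pi)"
  by (simp add: exp_weight_def mult_left_mono)

lemma exp_weight_le_exp_abs: "0 \<le> K \<Longrightarrow> exp_weight K x \<le> exp (K * \<bar>x\<bar>)"
  by (simp add: exp_weight_def mult_left_mono)

lemma exp_abs_le_exp_weight:
  assumes "0 \<le> K" "K * (\<bar>x\<bar> - pi) \<le> 1"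
  shows "exp (K * \<bar>x\<bar>) \<le> 3 * exp_weight K x"
proof (cases "\<bar>x\<bar> \<le> pi")
  case True
  then show ?thesis by (simp add: exp_weight_def)
next
  case False
  have "exp (K * \<bar>x\<bar>) \<le> exp (K * pi + 1)"
    using assms by (simp add: right_diff_distrib)
  also have "\<dots> \<le> exp (K * pi) * 3"
    using exp_le by (simp add: exp_add)
  finally show ?thesis
    using False by (simp add: exp_weight_def)
qed

lemma abs_exp_diff_le:
  fixes a b c :: real
  assumes "a \<le> c" "b \<le> c"
  shows "\<bar>exp a - exp b\<bar> \<le> exp c * \<bar>a - b\<bar>"
proof -
  have "exp u - exp v \<le> exp c * (u - v)" if "v \<le> u" "u \<le> c" for u v :: real
  proof -
    have "exp u - exp v = exp u * (1 - exp (v - u))"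
      by (simp add: exp_diff field_simps)
    also have "\<dots> \<le> exp u * (u - v)"
    proof (rule mult_left_mono)
      show "1 - exp (v - u) \<le> u - v"
        using exp_ge_add_one_self[of "v - u"] by linarith
    qed simp
    also have "\<dots> \<le> exp c * (u - v)"
      using that by (intro mult_right_mono) auto
    finally show ?thesis .
  qed
  from this[of b a] this[of a b] assms show ?thesis
    by (cases "b \<le> a") auto
qed

lemma W1inf_exp_weight:
  assumes "0 \<le> K"
  shows "W1inf (exp_weight K)"
  unfolding W1inf_def
proof
  show "bounded (range (exp_weight K))"
    using exp_weight_le[OF assms] exp_weight_pos
    by (intro boundedI[where B = "exp (K * pi)"]) (auto simp: less_imp_le)
  have "\<bar>exp_weight K x - exp_weight K y\<bar> \<le> exp (K * pi) * K * \<bar>x - y\<bar>" for x y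
  proof -
    have "\<bar>exp_weight K x - exp_weight K y\<bar>
        \<le> exp (K * pi) * \<bar>K * min \<bar>x\<bar> pi - K * min \<bar>y\<bar> pi\<bar>"
      unfolding exp_weight_def using assms by (intro abs_exp_diff_le mult_left_mono) auto
    also have "\<dots> = exp (K * pi) * K * \<bar>min \<bar>x\<bar> pi - min \<bar>y\<bar> pi\<bar>"
      using assms by (simp add: abs_mult flip: right_diff_distrib)
    also have "\<dots> \<le> exp (K * pi) * K * \<bar>x - y\<bar>"
      using assms by (intro mult_left_mono) (auto simp: min_def)
    finally show ?thesis .
  qed
  then show "\<exists>L. L-lipschitz_on UNIV (exp_weight K)"
    using assms by (intro exI[of _ "exp (K * pi) * K"] lipschitz_onI) (auto simp: dist_real_def)
qed

lemma sin_mult_derivative_exp_weight_nonneg: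
  assumes "0 \<le> K" "x \<noteq> 0" "x \<noteq> pi" "x \<noteq> -pi"
  obtains D where "(exp_weight K has_real_derivative D) (at x)" "0 \<le> sin x * D"
proof -
  consider "0 < x" "x < pi" | "-pi < x" "x < 0" | "x < -pi \<or> pi < x"
    using assms by linarith
  then show ?thesis
  proof cases
    case 1
    have "(exp_weight K has_real_derivative exp (K * x) * K) (at x)"
      by (rule has_field_derivative_transform_within_open[of "\<lambda>t. exp (K * t)" _ _ "{0<..<pi}"])
        (use 1 in \<open>auto intro!: derivative_eq_intros simp: exp_weight_def\<close>)
    moreover have "0 \<le> sin x"
      using 1 by (intro sin_ge_zero) auto
    ultimately show ?thesis
      using assms that by simp
  next
    case 2
    have "(exp_weight K has_real_derivative exp (- K * x) * (- K)) (at x)"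
      by (rule has_field_derivative_transform_within_open[of "\<lambda>t. exp (- K * t)" _ _ "{-pi<..<0}"])
        (use 2 in \<open>auto intro!: derivative_eq_intros simp: exp_weight_def\<close>)
    moreover have "sin x \<le> 0"
      using 2 sin_ge_zero[of "-x"] by auto
    ultimately show ?thesis
      using assms that[of "exp (- K * x) * (- K)"] by (simp add: mult_nonpos_nonneg)
  next
    case 3
    have "(exp_weight K has_real_derivative 0) (at x)"
      by (rule has_field_derivative_transform_within_open[of "\<lambda>t. exp (K * pi)" _ _ "{t. pi < \<bar>t\<bar>}"])
        (use 3 in \<open>auto simp: exp_weight_def intro!: open_Collect_less continuous_intros\<close>)
    then show ?thesis
      using that by simp
  qed
qed

lemma AE_sin_mult_deriv_exp_weight_nonneg:
  assumes "0 \<le> K"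
  shows "AE x in lborel. exp_weight K differentiable (at x) \<and> 0 \<le> sin x * deriv (exp_weight K) x"
proof -
  have "AE x in lborel. x \<noteq> 0 \<and> x \<noteq> pi \<and> x \<noteq> -pi"
    by (intro eventually_conj AE_lborel_singleton)
  then show ?thesis
  proof eventually_elim
    case (elim x)
    then obtain D where "(exp_weight K has_real_derivative D) (at x)" "0 \<le> sin x * D"
      using sin_mult_derivative_exp_weight_nonneg[OF assms] by blast
    then show ?case
      by (auto simp: DERIV_imp_deriv real_differentiable_def)
  qed
qed

lemma borel_measurable_exp_weight [measurable]: "exp_weight K \<in> borel_measurable borel"
  unfolding exp_weight_def by measurable

lemma set_integral_exp:
  fixes a b c s :: real
  assumes "a \<le> b" "s \<noteq> 0"
  shows "set_integrable lebesgue {a<..<b} (\<lambda>t. c * exp (s * t))"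
    and "(LINT t:{a<..<b}|lebesgue. c * exp (s * t)) = c * (exp (s * b) - exp (s * a)) / s"
proof -
  have "set_integrable lebesgue {a..b} (\<lambda>t. c * exp (s * t))"
    by (intro absolutely_integrable_continuous_real continuous_intros)
  then show integrable: "set_integrable lebesgue {a<..<b} (\<lambda>t. c * exp (s * t))"
    by (rule set_integrable_subset) auto
  have "((\<lambda>t. c * exp (s * t) / s) has_real_derivative c * exp (s * x)) (at x within {a..b})" for x
    using assms by (auto intro!: derivative_eq_intros)
  then have "((\<lambda>t. c * exp (s * t)) has_integral c * exp (s * b) / s - c * exp (s * a) / s) {a..b}"
    using assms by (intro fundamental_theorem_of_calculus) (auto simp: has_real_derivative_iff_has_vector_derivative)
  then have "integral {a..b} (\<lambda>t. c * exp (s * t)) = c * exp (s * b) / s - c * exp (s * a) / s"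
    by (rule integral_unique)
  moreover have "(LINT t:{a<..<b}|lebesgue. c * exp (s * t)) = integral {a..b} (\<lambda>t. c * exp (s * t))"
    unfolding set_lebesgue_integral_eq_integral(2)[OF integrable] by (rule integral_open_interval_real[symmetric])
  ultimately show "(LINT t:{a<..<b}|lebesgue. c * exp (s * t)) = c * (exp (s * b) - exp (s * a)) / s"
    by (simp add: diff_divide_distrib right_diff_distrib)
qed

lemma abs_set_integral_le_exp:
  fixes a b c s :: real and f :: "real \<Rightarrow> real"
  assumes "a \<le> b" "s \<noteq> 0" "set_integrable lebesgue {a<..<b} f"
    and "AE t in lebesgue. t \<in> {a<..<b} \<longrightarrow> \<bar>f t\<bar> \<le> c * exp (s * t)"
  shows "\<bar>LINT t:{a<..<b}|lebesgue. f t\<bar> \<le> c * (exp (s * b) - exp (s * a)) / s"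
proof -
  have "\<bar>LINT t:{a<..<b}|lebesgue. f t\<bar> \<le> (LINT t:{a<..<b}|lebesgue. norm (f t))"
    using set_integral_norm_bound[OF assms(3)] by simp
  also have "\<dots> \<le> (LINT t:{a<..<b}|lebesgue. c * exp (s * t))"
    using assms(4)
    by (intro set_integral_mono_AE set_integrable_norm[OF assms(3)] set_integral_exp(1)[OF assms(1,2)]) auto
  also have "\<dots> = c * (exp (s * b) - exp (s * a)) / s"
    by (rule set_integral_exp(2)[OF assms(1,2)])
  finally show ?thesis .
qed

lemma abs_interval_integral_le_exp:
  fixes c K x :: real and f :: "real \<Rightarrow> real"
  assumes "0 < K" "0 \<le> c" "set_integrable lebesgue {min 0 x<..<max 0 x} f"
    and "AE t in lebesgue. t \<in> {min 0 x<..<max 0 x} \<longrightarrow> \<bar>f t\<bar> \<le> c * exp (K * \<bar>t\<bar>)"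
  shows "\<bar>LINT t=0..x|lebesgue. f t\<bar> \<le> c * exp (K * \<bar>x\<bar>) / K"
proof (cases "0 \<le> x")
  case True
  have "\<bar>LINT t:{0<..<x}|lebesgue. f t\<bar> \<le> c * (exp (K * x) - exp (K * 0)) / K"
    using assms(4) True
    by (intro abs_set_integral_le_exp) (use assms in \<open>auto elim!: eventually_mono\<close>)
  also have "\<dots> \<le> c * exp (K * \<bar>x\<bar>) / K"
    using assms True by (intro divide_right_mono mult_left_mono) auto
  finally show ?thesis
    using True by (simp add: interval_lebesgue_integral_def zero_ereal_def)
next
  case False
  have "\<bar>LINT t:{x<..<0}|lebesgue. f t\<bar> \<le> c * (exp ((- K) * 0) - exp ((- K) * x)) / (- K)"
    using assms(4) False
    by (intro abs_set_integral_le_exp) (use assms in \<open>auto elim!: eventually_mono\<close>)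
  also have "\<dots> \<le> c * exp (K * \<bar>x\<bar>) / K"
    using assms False by (simp add: field_simps)
  finally show ?thesis
    using False by (simp add: interval_lebesgue_integral_def zero_ereal_def)
qed

lemma continuous_on_interval_integral:
  fixes f :: "real \<Rightarrow> real"
  assumes f: "set_integrable lebesgue {a..b} f" and "a \<le> 0" "0 \<le> b"
  shows "continuous_on {a..b} (\<lambda>x. LINT t=0..x|lebesgue. f t)"
proof -
  have f_HK: "f integrable_on {a..b}"
    using f by (rule set_lebesgue_integral_eq_integral(1))
  have primitive_eq: "(LINT t=0..x|lebesgue. f t) = integral {a..x} f - integral {a..0} f"
    if x: "x \<in> {a..b}" for x
  proof (cases "0 \<le> x")
    case True
    have "set_integrable lebesgue {0<..<x} f"
      using x assms by (intro set_integrable_subset[OF f]) auto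
    then have "(LINT t=0..x|lebesgue. f t) = integral {0..x} f"
      using True by (simp add: interval_lebesgue_integral_def zero_ereal_def
          set_lebesgue_integral_eq_integral(2) integral_open_interval_real)
    moreover have "integral {a..0} f + integral {0..x} f = integral {a..x} f"
      using True assms x
      by (intro Henstock_Kurzweil_Integration.integral_combine integrable_on_subinterval[OF f_HK]) auto
    ultimately show ?thesis by simp
  next
    case False
    have "set_integrable lebesgue {x<..<0} f"
      using x assms by (intro set_integrable_subset[OF f]) auto
    then have "(LINT t=0..x|lebesgue. f t) = - integral {x..0} f"
      using False by (simp add: interval_lebesgue_integral_def zero_ereal_def
          set_lebesgue_integral_eq_integral(2) integral_open_interval_real)
    moreover have "integral {a..x} f + integral {x..0} f = integral {a..0} f"
      using False assms x
      by (intro Henstock_Kurzweil_Integration.integral_combine integrable_on_subinterval[OF f_HK]) auto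
    ultimately show ?thesis by simp
  qed
  have "continuous_on {a..b} (\<lambda>x. integral {a..x} f - integral {a..0} f)"
    using indefinite_integral_continuous_1[OF f_HK] by (intro continuous_intros)
  then show ?thesis
    by (rule continuous_on_eq) (simp add: primitive_eq)
qed

lemma AE_abs_le_Linf_norm: "AE x in lebesgue. x \<in> {a..b} \<longrightarrow> ereal \<bar>g x\<bar> \<le> Linf_norm a b g"
proof -
  have "AE x in restrict_space lebesgue {a..b}. ereal \<bar>g x\<bar> \<le> Linf_norm a b g"
    unfolding Linf_norm_def by (rule esssup_AE)
  then show ?thesis
    by (simp add: AE_restrict_space_iff)
qed

lemma Linf_norm_nonneg:
  assumes "a < b"
  shows "0 \<le> Linf_norm a b g"
proof -
  have "emeasure (restrict_space lebesgue {a..b}) (space (restrict_space lebesgue {a..b})) \<noteq> 0"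
    using assms by (simp add: emeasure_restrict_space space_restrict_space)
  then have "ae_filter (restrict_space lebesgue {a..b}) \<noteq> bot"
    by (simp add: ae_filter_eq_bot_iff)
  moreover have "AE x in restrict_space lebesgue {a..b}. 0 \<le> Linf_norm a b g"
    unfolding Linf_norm_def using esssup_AE by (rule eventually_mono) (erule order_trans[rotated], simp)
  ultimately show ?thesis
    by simp
qed

lemma Linf_norm_le:
  assumes "g \<in> borel_measurable (restrict_space lebesgue {a..b})"
    and "\<And>x. x \<in> {a..b} \<Longrightarrow> \<bar>g x\<bar> \<le> c"
  shows "Linf_norm a b g \<le> ereal c"
  unfolding Linf_norm_def
proof (rule esssup_I)
  show "(\<lambda>x. ereal \<bar>g x\<bar>) \<in> borel_measurable (restrict_space lebesgue {a..b})"
    using assms(1) by measurable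
  show "AE x in restrict_space lebesgue {a..b}. ereal \<bar>g x\<bar> \<le> ereal c"
    using assms(2) by (intro AE_I2) (simp add: space_restrict_space)
qed

lemma AE_abs_le_Linf_norm_mult:
  assumes "Linf_norm a b (\<lambda>x. f x / w x) = ereal m"
  shows "AE t in lebesgue. t \<in> {a..b} \<longrightarrow> w t \<noteq> 0 \<longrightarrow> \<bar>f t\<bar> \<le> m * \<bar>w t\<bar>"
  using AE_abs_le_Linf_norm[of a b "\<lambda>x. f x / w x"]
  by eventually_elim (auto simp: assms abs_divide pos_divide_le_eq)

lemma set_integrable_AE_bounded:
  fixes f :: "real \<Rightarrow> real"
  assumes "f \<in> borel_measurable (restrict_space lebesgue {a..b})"
    and "AE t in lebesgue. t \<in> {a..b} \<longrightarrow> \<bar>f t\<bar> \<le> C"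
  shows "set_integrable lebesgue {a..b} f"
proof (rule set_integrable_bound[where f = "\<lambda>_. C"])
  show "set_integrable lebesgue {a..b} (\<lambda>_. C)"
    by (intro absolutely_integrable_continuous_real continuous_intros)
  show "set_borel_measurable lebesgue {a..b} f"
    using assms(1) by (simp add: set_borel_measurable_def borel_measurable_restrict_space_iff)
  show "AE t in lebesgue. t \<in> {a..b} \<longrightarrow> norm (f t) \<le> norm C"
    using assms(2) by eventually_elim auto
qed

lemma set_integrable_Wm1_radial_exp_weight_bound:
  fixes f :: "real \<Rightarrow> real"
  assumes "f \<in> borel_measurable (restrict_space lebesgue {a..b})" "0 \<le> K" "0 \<le> m"
    and "AE t in lebesgue. t \<in> {a..b} \<longrightarrow> \<bar>f t\<bar> \<le> m * Wm1_radial \<bar>t\<bar> * exp_weight K t"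
  shows "set_integrable lebesgue {a..b} f"
proof (rule set_integrable_AE_bounded[OF assms(1), where C = "m * exp (K * pi)"])
  show "AE t in lebesgue. t \<in> {a..b} \<longrightarrow> \<bar>f t\<bar> \<le> m * exp (K * pi)"
    using assms(4)
  proof (rule eventually_mono, intro impI)
    fix t assume "t \<in> {a..b} \<longrightarrow> \<bar>f t\<bar> \<le> m * Wm1_radial \<bar>t\<bar> * exp_weight K t" "t \<in> {a..b}"
    moreover have "m * Wm1_radial \<bar>t\<bar> * exp_weight K t \<le> m * 1 * exp (K * pi)"
      using assms(2,3) Wm1_radial_le_1[of "\<bar>t\<bar>"] Wm1_radial_nonneg[of "\<bar>t\<bar>"] exp_weight_le[of K t]
        exp_weight_pos[of K t, THEN less_imp_le]
      by (intro mult_mono mult_left_mono) auto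
    ultimately show "\<bar>f t\<bar> \<le> m * exp (K * pi)"
      by simp
  qed
qed

lemma abs_primitive_le_Wm1_radial:
  fixes f :: "real \<Rightarrow> real"
  assumes "0 < K" "0 \<le> m" "set_integrable lebesgue {min 0 x<..<max 0 x} f"
    and "AE t in lebesgue. t \<in> {min 0 x<..<max 0 x} \<longrightarrow>
      \<bar>f t\<bar> \<le> m * Wm1_radial \<bar>t\<bar> * exp_weight K t"
  shows "\<bar>LINT t=0..x|lebesgue. f t\<bar> \<le> m * Wm1_radial \<bar>x\<bar> * exp (K * \<bar>x\<bar>) / K"
proof (rule abs_interval_integral_le_exp[OF assms(1) _ assms(3)])
  show "0 \<le> m * Wm1_radial \<bar>x\<bar>"
    using assms(2) Wm1_radial_nonneg[of "\<bar>x\<bar>"] by simp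
  show "AE t in lebesgue. t \<in> {min 0 x<..<max 0 x} \<longrightarrow>
      \<bar>f t\<bar> \<le> m * Wm1_radial \<bar>x\<bar> * exp (K * \<bar>t\<bar>)"
    using assms(4)
  proof eventually_elim
    case (elim t)
    show ?case
    proof
      assume t: "t \<in> {min 0 x<..<max 0 x}"
      then have "\<bar>f t\<bar> \<le> m * Wm1_radial \<bar>t\<bar> * exp_weight K t"
        using elim by blast
      also have "\<dots> \<le> m * Wm1_radial \<bar>x\<bar> * exp (K * \<bar>t\<bar>)"
        using t assms(1,2) Wm1_radial_nonneg[of "\<bar>x\<bar>"] exp_weight_pos[of K t, THEN less_imp_le]
          exp_weight_le_exp_abs[of K t]
        by (intro mult_mono mult_left_mono Wm1_radial_mono) auto
      finally show "\<bar>f t\<bar> \<le> m * Wm1_radial \<bar>x\<bar> * exp (K * \<bar>t\<bar>)" .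
    qed
  qed
qed

lemma AE_abs_le_Wm1_radial_exp_weight:
  assumes "Linf_norm a b (\<lambda>x. f x / (Wm1 x * exp_weight K x)) = ereal m"
    and "\<And>x. x \<in> {a..b} \<Longrightarrow> \<bar>x\<bar> < 4*pi/3"
  shows "AE t in lebesgue. t \<in> {a..b} \<longrightarrow> \<bar>f t\<bar> \<le> m * Wm1_radial \<bar>t\<bar> * exp_weight K t"
  using AE_abs_le_Linf_norm_mult[OF assms(1)] AE_completion[OF AE_lborel_singleton[of 0]]
proof eventually_elim
  case (elim t)
  show ?case
  proof
    assume t: "t \<in> {a..b}"
    have "0 < Wm1_radial \<bar>t\<bar>" "0 < exp_weight K t"
      using elim by (simp_all add: Wm1_radial_pos exp_weight_pos)
    then show "\<bar>f t\<bar> \<le> m * Wm1_radial \<bar>t\<bar> * exp_weight K t"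
      using elim t assms(2) by (simp add: Wm1_eq_Wm1_radial abs_mult mult.assoc)
  qed
qed

lemma abs_sin_mult_div_Wm1_exp_weight_le:
  assumes "0 < K" "0 \<le> m" "\<bar>x\<bar> < 4*pi/3" "exp (K * \<bar>x\<bar>) \<le> 3 * exp_weight K x"
    and "\<bar>y\<bar> \<le> m * Wm1_radial \<bar>x\<bar> * exp (K * \<bar>x\<bar>) / K"
  shows "\<bar>sin x * y / (Wm1 x * exp_weight K x)\<bar> \<le> 3 / K * m"
proof (cases "x = 0")
  case True
  \<comment> \<open>W_{-1} vanishes at 0, so the quotient is 0 by the convention x / 0 = 0.\<close>
  then show ?thesis
    using assms(1,2) by (simp add: Wm1_def)
next
  case False
  have pos: "0 < Wm1_radial \<bar>x\<bar> * exp_weight K x"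
    using False by (simp add: Wm1_radial_pos exp_weight_pos)
  have "\<bar>sin x * y\<bar> \<le> \<bar>y\<bar>"
    by (simp add: abs_mult mult_left_le_one_le)
  also have "\<dots> \<le> m * Wm1_radial \<bar>x\<bar> * exp (K * \<bar>x\<bar>) / K"
    by (rule assms(5))
  also have "\<dots> \<le> m * Wm1_radial \<bar>x\<bar> * (3 * exp_weight K x) / K"
    using assms(1,2,4) Wm1_radial_nonneg[of "\<bar>x\<bar>"] by (intro divide_right_mono mult_left_mono) auto
  also have "\<dots> = 3 / K * m * (Wm1_radial \<bar>x\<bar> * exp_weight K x)"
    by simp
  finally show ?thesis
    using pos assms(3) by (simp add: Wm1_eq_Wm1_radial abs_divide abs_of_pos pos_divide_le_eq)
qed

lemma borel_measurable_sin_mult_primitive_div: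
  fixes f :: "real \<Rightarrow> real"
  assumes "set_integrable lebesgue {a..b} f" "a \<le> 0" "0 \<le> b"
  shows "(\<lambda>x. sin x * (LINT t=0..x|lebesgue. f t) / (Wm1 x * exp_weight K x))
    \<in> borel_measurable (restrict_space lebesgue {a..b})"
proof -
  have [measurable]: "(\<lambda>x. LINT t=0..x|lebesgue. f t) \<in> borel_measurable (restrict_space lebesgue {a..b})"
    using continuous_on_interval_integral[OF assms] by (rule continuous_imp_measurable_on_sets_lebesgue) simp
  have [measurable]: "(\<lambda>x. x) \<in> borel_measurable (restrict_space lebesgue {a..b})"
    using id_borel_measurable_lebesgue_on by (simp add: id_def)
  show ?thesis
    by measurable
qed

lemma Linf_norm_sin_mult_primitive_le:
  fixes K xs :: real and f :: "real \<Rightarrow> real"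
  assumes K: "0 < K" "K * \<bar>xs\<bar> \<le> 1" and xs: "\<bar>xs\<bar> < pi/3"
    and f_meas: "f \<in> borel_measurable (restrict_space lebesgue {-pi-xs..pi-xs})"
    and f_finite: "Linf_norm (-pi-xs) (pi-xs) (\<lambda>x. f x / (Wm1 x * exp_weight K x)) < \<infinity>"
  shows "Linf_norm (-pi-xs) (pi-xs) (\<lambda>x. sin x * (LINT t=0..x|lebesgue. f t) / (Wm1 x * exp_weight K x))
    \<le> ereal (3 / K) * Linf_norm (-pi-xs) (pi-xs) (\<lambda>x. f x / (Wm1 x * exp_weight K x))"
proof -
  define D where "D = {-pi-xs..pi-xs}"
  have D: "-pi-xs < pi-xs" "-pi-xs \<le> 0" "0 \<le> pi-xs"
    using xs pi_gt3 by auto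
  have abs_le_D: "\<bar>x\<bar> \<le> pi + \<bar>xs\<bar>" "\<bar>x\<bar> < 4*pi/3" if "x \<in> D" for x
    using that xs by (auto simp: D_def)
  have exp_D: "exp (K * \<bar>x\<bar>) \<le> 3 * exp_weight K x" if "x \<in> D" for x
    using K mult_left_mono[OF abs_le_D(1)[OF that], of K]
    by (intro exp_abs_le_exp_weight) (auto simp: algebra_simps)
  obtain m where m: "Linf_norm (-pi-xs) (pi-xs) (\<lambda>x. f x / (Wm1 x * exp_weight K x)) = ereal m" "0 \<le> m"
    using f_finite Linf_norm_nonneg[OF D(1), of "\<lambda>x. f x / (Wm1 x * exp_weight K x)"]
    by (cases "Linf_norm (-pi-xs) (pi-xs) (\<lambda>x. f x / (Wm1 x * exp_weight K x))") auto
  have f_bound: "AE t in lebesgue. t \<in> D \<longrightarrow> \<bar>f t\<bar> \<le> m * Wm1_radial \<bar>t\<bar> * exp_weight K t"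
    unfolding D_def by (rule AE_abs_le_Wm1_radial_exp_weight[OF m(1)]) (use abs_le_D in \<open>simp add: D_def\<close>)
  have f_int: "set_integrable lebesgue D f"
    using f_meas K(1) m(2) f_bound unfolding D_def by (intro set_integrable_Wm1_radial_exp_weight_bound) auto
  have primitive_bound: "\<bar>LINT t=0..x|lebesgue. f t\<bar> \<le> m * Wm1_radial \<bar>x\<bar> * exp (K * \<bar>x\<bar>) / K"
    if x: "x \<in> D" for x
  proof (rule abs_primitive_le_Wm1_radial[OF K(1) m(2)])
    have between_D: "{min 0 x<..<max 0 x} \<subseteq> D"
      using x D by (auto simp: D_def)
    show "set_integrable lebesgue {min 0 x<..<max 0 x} f"
      by (rule set_integrable_subset[OF f_int _ between_D]) simp
    show "AE t in lebesgue. t \<in> {min 0 x<..<max 0 x} \<longrightarrow>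
        \<bar>f t\<bar> \<le> m * Wm1_radial \<bar>t\<bar> * exp_weight K t"
      using f_bound by eventually_elim (use between_D in blast)
  qed
  have "Linf_norm (-pi-xs) (pi-xs) (\<lambda>x. sin x * (LINT t=0..x|lebesgue. f t) / (Wm1 x * exp_weight K x))
      \<le> ereal (3 / K * m)"
  proof (rule Linf_norm_le)
    show "(\<lambda>x. sin x * (LINT t=0..x|lebesgue. f t) / (Wm1 x * exp_weight K x))
        \<in> borel_measurable (restrict_space lebesgue {-pi-xs..pi-xs})"
      using f_int D(2,3) unfolding D_def by (rule borel_measurable_sin_mult_primitive_div)
    show "\<bar>sin x * (LINT t=0..x|lebesgue. f t) / (Wm1 x * exp_weight K x)\<bar> \<le> 3 / K * m"
      if "x \<in> {-pi-xs..pi-xs}" for x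
      using that unfolding D_def [symmetric]
      by (intro abs_sin_mult_div_Wm1_exp_weight_le K(1) m(2) abs_le_D exp_D primitive_bound)
  qed
  then show ?thesis
    using m(1) by simp
qed

theorem lemma3p3:
  fixes \<theta> :: real
  assumes "0 < \<theta>" and "\<theta> < 1"
  shows "\<exists>\<delta>0>0. \<forall>\<delta>s. 0 < \<delta>s \<and> \<delta>s < \<delta>0 \<longrightarrow>
    (\<forall>xs. \<bar>xs\<bar> < \<delta>s \<longrightarrow>
      (\<exists>Wt :: real \<Rightarrow> real.
         (\<forall>x. Wt x > 0) \<and> W1inf Wt \<and>
         (AE x in lborel. Wt differentiable (at x) \<and> sin x * deriv Wt x \<ge> 0) \<and>
         (\<forall>f :: real \<Rightarrow> real.
            f \<in> borel_measurable (restrict_space lebesgue {-pi-xs..pi-xs}) \<and>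
            Linf_norm (-pi-xs) (pi-xs) (\<lambda>x. f x / (Wm1 x * Wt x)) < \<infinity> \<longrightarrow>
            Linf_norm (-pi-xs) (pi-xs)
              (\<lambda>x. sin x * interval_lebesgue_integral lebesgue 0 (ereal x) f / (Wm1 x * Wt x))
            \<le> ereal \<theta> * Linf_norm (-pi-xs) (pi-xs) (\<lambda>x. f x / (Wm1 x * Wt x)))))"
proof -
  define K where "K = 3 / \<theta>"
  have K: "0 < K" "0 \<le> K" "3 / K = \<theta>"
    using assms by (simp_all add: K_def)
  have xs_small: "K * \<bar>xs\<bar> \<le> 1" "\<bar>xs\<bar> < pi / 3" if "\<bar>xs\<bar> < \<theta> / 3" for xs
    using that assms pi_gt3 by (simp_all add: K_def field_simps)
  show ?thesis
  proof (intro exI[of _ "\<theta> / 3"] exI[of _ "exp_weight K"] conjI allI impI)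
    fix \<delta>s xs :: real and f :: "real \<Rightarrow> real"
    assume "0 < \<delta>s \<and> \<delta>s < \<theta> / 3" "\<bar>xs\<bar> < \<delta>s"
    then have "\<bar>xs\<bar> < \<theta> / 3"
      by simp
    moreover assume "f \<in> borel_measurable (restrict_space lebesgue {-pi-xs..pi-xs}) \<and>
      Linf_norm (-pi-xs) (pi-xs) (\<lambda>x. f x / (Wm1 x * exp_weight K x)) < \<infinity>"
    ultimately show "Linf_norm (-pi-xs) (pi-xs)
        (\<lambda>x. sin x * interval_lebesgue_integral lebesgue 0 (ereal x) f / (Wm1 x * exp_weight K x))
      \<le> ereal \<theta> * Linf_norm (-pi-xs) (pi-xs) (\<lambda>x. f x / (Wm1 x * exp_weight K x))"
      using Linf_norm_sin_mult_primitive_le[OF K(1) xs_small] K(3) by auto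
  qed (use assms AE_sin_mult_deriv_exp_weight_nonneg[OF K(2)] in
      \<open>auto simp: exp_weight_pos W1inf_exp_weight[OF K(2)]\<close>)
qed

end
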